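(* Let $p$ be a prime with $p\equiv\pm3\pmod 8$, $q=p^s$, let $m$ be an integer with $2^m\mid(q-1)$ and $m\ge 3$ if $p\equiv 3\pmod 8$, $m\ge 2$ if $p\equiv -3\pmod 8$, and let $\lambda$ be a multiplicative character of order $2^m$ on $\mathbb F_q$. For $1\le r\le m$, $0\le t\le m$ and odd integer $c_0$ put $$W_{r,t}(c_0)=\sum_{\substack{j_0=1\\ 2\nmid j_0}}^{2^r-1}G(\lambda^{2^{m-r}j_0})\,\zeta_{2^{m-t}}^{2^{m-r}c_0j_0}.$$ Then $$W_{1,t}(c_0)=\begin{cases}-G(\eta)&\text{if } t=0,\\ G(\eta)&\text{if } t\ge 1,\end{cases}\qquad W_{2,t}(c_0)=\begin{cases}G(\lambda^{2^{m-2}})+G(\bar\lambda^{2^{m-2}})&\text{if } t\ge 2,\\ -\bigl(G(\lambda^{2^{m-2}})+G(\bar\lambda^{2^{m-2}})\bigr)&\text{if } t=1,\\ i^{c_0}\bigl(G(\lambda^{2^{m-2}})-G(\bar\lambda^{2^{m-2}})\bigr)&\text{if } t=0,\end{cases}$$ and, for $3\le r\le m$, $$W_{r,t}(c_0)=\begin{cases} 2^{r-2}\bigl(G(\lambda^{2^{m-r}})+G(\bar\lambda^{2^{m-r}})\bigr)&\text{if } r\le t,\\ -2^{r-2}\bigl(G(\lambda^{2^{m-r}})+G(\bar\lambda^{2^{m-r}})\bigr)&\text{if } r=t+1,\\ 2^{r-2} i^{c_0}\bigl(G(\lambda^{2^{m-r}})-G(\bar\lambda^{2^{m-r}})\bigr)&\text{if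 } r=t+2 \text{ and } p\equiv -3\pmod{8},\\ 2^{r-3} i\sqrt{2}\,\bigl(G(\lambda^{2^{m-r}})-G(\bar\lambda^{2^{m-r}})\bigr)&\text{if } r=t+3,\ p\equiv 3\pmod{8},\ c_0\equiv 1\text{ or }3\pmod{8},\\ -2^{r-3} i\sqrt{2}\,\bigl(G(\lambda^{2^{m-r}})-G(\bar\lambda^{2^{m-r}})\bigr)&\text{if } r=t+3,\ p\equiv 3\pmod{8},\ c_0\equiv 5\text{ or }7\pmod{8},\\ 0&\text{otherwise.} \end{cases}$$
   Context: Multiplicative characters are extended by $\psi(0)=0$; $\bar\lambda$ is the complex conjugate (inverse) character; $\eta$ is the quadratic character of $\mathbb F_q$; $\zeta_k=e^{2\pi i/k}$, $i=\sqrt{-1}$. The Gauss sum of a nontrivial character $\psi$ on $\mathbb F_q$ is $G(\psi)=\sum_{x\in\mathbb F_q}\psi(x)\zeta_p^{\mathrm{Tr}(x)}$, with $\mathrm{Tr}$ the trace from $\mathbb F_q$ to $\mathbb F_p$. *)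

theory Defs
  imports Complex_Main "HOL-Computational_Algebra.Primes"
begin

definition mult_char :: "('a::{finite,field} \<Rightarrow> complex) \<Rightarrow> bool" where
  "mult_char \<psi> \<longleftrightarrow> \<psi> 0 = 0 \<and> (\<forall>x. x \<noteq> 0 \<longrightarrow> \<psi> x \<noteq> 0) \<and>
     (\<forall>x y. x \<noteq> 0 \<longrightarrow> y \<noteq> 0 \<longrightarrow> \<psi> (x * y) = \<psi> x * \<psi> y)"

definition char_order :: "('a::{finite,field} \<Rightarrow> complex) \<Rightarrow> nat" where
  "char_order \<psi> = (LEAST n. n > 0 \<and> (\<forall>x. x \<noteq> 0 \<longrightarrow> \<psi> x ^ n = 1))"

text \<open>k-th power of a character (k > 0); conjugate character.\<close>
definition char_pow :: "('a \<Rightarrow> complex) \<Rightarrow> nat \<Rightarrow> 'a \<Rightarrow> complex" where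
  "char_pow \<psi> k = (\<lambda>x. \<psi> x ^ k)"

definition char_conj :: "('a \<Rightarrow> complex) \<Rightarrow> 'a \<Rightarrow> complex" where
  "char_conj \<psi> = (\<lambda>x. cnj (\<psi> x))"

definition zeta_pow :: "nat \<Rightarrow> int \<Rightarrow> complex" where
  "zeta_pow n a = exp (2 * pi * \<i> * of_int a / of_nat n)"

text \<open>Absolute trace F_q -> F_p (q = p^s), valued in the prime subfield of 'a.\<close>
definition trace :: "nat \<Rightarrow> nat \<Rightarrow> 'a::{finite,field} \<Rightarrow> 'a" where
  "trace p s x = (\<Sum>i<s. x ^ (p ^ i))"

text \<open>The trace as an element of {0..p-1} = F_p.\<close>
definition trace_index :: "nat \<Rightarrow> nat \<Rightarrow> 'a::{finite,field} \<Rightarrow> nat" where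
  "trace_index p s x = (THE k. k < p \<and> of_nat k = trace p s x)"

definition gauss_sum :: "nat \<Rightarrow> nat \<Rightarrow> ('a::{finite,field} \<Rightarrow> complex) \<Rightarrow> complex" where
  "gauss_sum p s \<psi> = (\<Sum>x\<in>UNIV. \<psi> x * zeta_pow p (int (trace_index p s x)))"

definition quad_char :: "'a::{finite,field} \<Rightarrow> complex" where
  "quad_char x = (if x = 0 then 0 else if (\<exists>y. y * y = x) then 1 else -1)"

definition W :: "nat \<Rightarrow> nat \<Rightarrow> ('a::{finite,field} \<Rightarrow> complex) \<Rightarrow> nat \<Rightarrow> nat \<Rightarrow> nat \<Rightarrow> int \<Rightarrow> complex" where
  "W p s \<chi> m r t c0 =
     (\<Sum>j0\<in>{j. 1 \<le> j \<and> j \<le> 2^r - 1 \<and> odd j}.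
        gauss_sum p s (char_pow \<chi> (2^(m-r) * j0)) *
        zeta_pow (2^(m-t)) (2^(m-r) * c0 * int j0))"

end

theory Submission
  imports Defs
begin

text \<open>
  Substituting \<open>x \<mapsto> x\<^sup>p\<close> permutes the field and preserves the trace, so \<open>G(\<psi>\<^sup>p) = G(\<psi>)\<close>.
  Hence \<open>G(\<lambda>^(2^(m-r) j))\<close> depends only on the coset of \<open>j\<close> modulo the subgroup generated
  by \<open>p\<close> in \<open>(\<int>/2^r)\<^sup>*\<close>. By 2-adic lifting this subgroup consists of the classes
  \<open>j \<equiv> 1 mod 4\<close> if \<open>p \<equiv> 5 mod 8\<close>, and \<open>j \<equiv> 1, 3 mod 8\<close> if \<open>p \<equiv> 3 mod 8\<close>; multiplying
  by \<open>-1\<close>, which replaces \<open>\<lambda>\<close> by its conjugate, accounts for the remaining odd \<open>j\<close>.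
  So the Gauss sums in \<open>W\<^sub>r\<^sub>,\<^sub>t\<close> take only the two values \<open>G(\<lambda>^(2^(m-r)))\<close> and
  \<open>G(conj \<lambda>^(2^(m-r)))\<close>, each constant on residue classes modulo 4 resp. 8, and summing
  \<open>\<zeta>\<^sub>2\<^sub>^\<^sub>(\<^sub>r\<^sub>-\<^sub>t\<^sub>)^(c\<^sub>0 j)\<close> over such a class is a geometric sum that vanishes
  unless \<open>r - t \<le> 2\<close> resp. \<open>r - t \<le> 3\<close>. The surviving cases are fourth and eighth roots
  of unity; for \<open>r = 1\<close>, \<open>\<lambda>^(2^(m-1))\<close> is the quadratic character.
\<close>

section \<open>Roots of unity\<close>

lemma zeta_pow_eq_cis: "zeta_pow n a = cis (2 * pi * of_int a / of_nat n)"
  unfolding zeta_pow_def cis_conv_exp by (simp add: mult_ac)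

lemma zeta_pow_add: "zeta_pow n (a + b) = zeta_pow n a * zeta_pow n b"
  unfolding zeta_pow_def by (simp add: distrib_left add_divide_distrib exp_add)

lemma zeta_pow_mult_nat: "zeta_pow n (int k * a) = zeta_pow n a ^ k"
  unfolding zeta_pow_def by (simp add: exp_of_nat_mult[symmetric] mult_ac)

lemma zeta_pow_multiple: "n > 0 \<Longrightarrow> zeta_pow n (int n * k) = 1"
proof -
  assume "n > 0"
  then have "2 * pi * of_int (int n * k) / of_nat n = 2 * pi * of_int k" by simp
  then show ?thesis unfolding zeta_pow_eq_cis by (simp add: cis_multiple_2pi)
qed

text \<open>Stated for \<open>Suc 0\<close>, the form in which the simplifier leaves \<open>2 ^ 0\<close>.\<close>
lemma zeta_pow_Suc_0 [simp]: "zeta_pow (Suc 0) a = 1"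
  using zeta_pow_multiple[of 1 a] by simp

lemma zeta_pow_cancel: "d > 0 \<Longrightarrow> zeta_pow (d * n) (int d * a) = zeta_pow n a"
  unfolding zeta_pow_eq_cis by (simp add: mult_ac)

lemma zeta_pow_mod: "n > 0 \<Longrightarrow> zeta_pow n (a mod int n) = zeta_pow n a"
  using zeta_pow_add[of n "a mod int n" "int n * (a div int n)"] zeta_pow_multiple[of n "a div int n"]
  by simp

lemma zeta_pow_2_odd: "odd a \<Longrightarrow> zeta_pow 2 a = -1"
  using zeta_pow_mod[of 2 a] by (simp add: odd_iff_mod_2_eq_one zeta_pow_def)

lemma zeta_pow_4: "zeta_pow 4 a = \<i> powi a"
proof -
  have "\<i> powi a = cis (pi / 2) powi a" by simp
  also have "\<dots> = cis (of_int a * (pi / 2))" by (rule cis_power_int)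
  finally show ?thesis unfolding zeta_pow_eq_cis by (simp add: field_simps)
qed

lemma zeta_pow_two_pow_add_multiple:
  assumes "n \<le> e"
  shows "zeta_pow (2 ^ n) (a + 2 ^ e * b) = zeta_pow (2 ^ n) a"
proof -
  have "(2::int) ^ e * b = int (2 ^ n) * (2 ^ (e - n) * b)"
    using assms by (simp add: mult.assoc flip: power_add)
  then show ?thesis by (simp only: zeta_pow_add zeta_pow_multiple zero_less_power pos2 mult_1_right)
qed

lemma zeta_pow_two_pow_add_half:
  assumes "1 \<le> n" "odd b"
  shows "zeta_pow (2 ^ n) (a + 2 ^ (n - 1) * b) = - zeta_pow (2 ^ n) a"
proof -
  have "(2::nat) ^ n = 2 ^ (n - 1) * 2"
    using assms(1) by (simp flip: power_Suc2)
  then have "zeta_pow (2 ^ n) (2 ^ (n - 1) * b) = zeta_pow (2 ^ (n - 1) * 2) (int (2 ^ (n - 1)) * b)"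
    by simp
  also have "\<dots> = -1" using zeta_pow_2_odd[OF assms(2)] by (simp only: zeta_pow_cancel zero_less_power pos2)
  finally show ?thesis by (simp add: zeta_pow_add)
qed

lemma zeta_pow_two_pow_scale:
  assumes "r \<le> m" "t \<le> m"
  shows "zeta_pow (2 ^ (m - t)) (2 ^ (m - r) * a) = zeta_pow (2 ^ (r - t)) a"
proof (cases "r \<le> t")
  case True
  then have "(2::int) ^ (m - r) * a = int (2 ^ (m - t)) * (2 ^ (t - r) * a)"
    using assms by (simp flip: power_add)
  then have "zeta_pow (2 ^ (m - t)) (2 ^ (m - r) * a) = 1"
    by (simp only: zeta_pow_multiple zero_less_power pos2)
  then show ?thesis using True by simp
next
  case False
  then have "(2::nat) ^ (m - t) = 2 ^ (m - r) * 2 ^ (r - t)"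
    using assms by (simp flip: power_add)
  then show ?thesis using zeta_pow_cancel[of "2 ^ (m - r)" "2 ^ (r - t)" a] by simp
qed

lemma zeta_pow_8_odd_sum:
  assumes "odd c"
  shows "zeta_pow 8 c + zeta_pow 8 (3 * c) =
    (if c mod 8 = 1 \<or> c mod 8 = 3 then \<i> * complex_of_real (sqrt 2)
     else - (\<i> * complex_of_real (sqrt 2)))"
proof -
  define \<omega> where "\<omega> = zeta_pow 8 1"
  have residue: "zeta_pow 8 x = \<omega> ^ nat (x mod 8)" for x
    using zeta_pow_mod[of 8 x] zeta_pow_mult_nat[of 8 "nat (x mod 8)" 1] by (simp add: \<omega>_def)
  have \<omega>: "\<omega> = complex_of_real (sqrt 2 / 2) * (1 + \<i>)"
    unfolding \<omega>_def zeta_pow_eq_cis by (simp add: complex_eq_iff cos_45 sin_45 field_simps)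
  have \<omega>2: "\<omega> ^ 2 = \<i>"
    using zeta_pow_mult_nat[of 8 2 1] zeta_pow_cancel[of 2 4 1] zeta_pow_4[of 1] by (simp add: \<omega>_def)
  have \<omega>4: "\<omega> ^ 4 = -1"
    using \<omega>2 power_mult[of \<omega> 2 2] by simp
  have \<omega>_sum: "\<omega> + \<omega> ^ 3 = \<i> * complex_of_real (sqrt 2)"
  proof -
    have "\<omega> + \<omega> ^ 3 = \<omega> * (1 + \<i>)" using \<omega>2 by (simp add: power3_eq_cube power2_eq_square algebra_simps)
    also have "\<dots> = complex_of_real (sqrt 2 / 2) * ((1 + \<i>) * (1 + \<i>))" by (simp add: \<omega>)
    also have "(1 + \<i>) * (1 + \<i>) = 2 * \<i>" by (simp add: algebra_simps)
    finally show ?thesis by simp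
  qed
  have \<omega>5: "\<omega> ^ 5 = - \<omega>" and \<omega>7: "\<omega> ^ 7 = - (\<omega> ^ 3)"
    using \<omega>4 power_add[of \<omega> 4 1] power_add[of \<omega> 4 3] by simp_all
  have triple: "3 * c mod 8 = 3 * (c mod 8) mod 8"
    by (simp add: mod_mult_right_eq)
  have "c mod 8 = 1 \<or> c mod 8 = 3 \<or> c mod 8 = 5 \<or> c mod 8 = 7"
    using assms by presburger
  then show ?thesis
  proof (elim disjE)
    assume "c mod 8 = 1"
    then show ?thesis using \<omega>_sum by (simp add: residue triple)
  next
    assume "c mod 8 = 3"
    then show ?thesis using \<omega>_sum by (simp add: residue triple add.commute)
  next
    assume "c mod 8 = 5"
    then show ?thesis by (simp add: residue triple \<omega>5 \<omega>7 flip: \<omega>_sum)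
  next
    assume "c mod 8 = 7"
    then show ?thesis by (simp add: residue triple \<omega>5 \<omega>7 flip: \<omega>_sum)
  qed
qed

lemma residue_class_below_eq_image:
  fixes M K a :: nat
  assumes "a < M"
  shows "{j. j < M * K \<and> j mod M = a} = (\<lambda>k. a + M * k) ` {..<K}"
proof (intro set_eqI iffI)
  fix j assume j: "j \<in> {j. j < M * K \<and> j mod M = a}"
  then have "j = a + M * (j div M)" "j div M < K"
    by (auto simp: less_mult_imp_div_less mult.commute)
  then show "j \<in> (\<lambda>k. a + M * k) ` {..<K}" by blast
next
  fix j assume "j \<in> (\<lambda>k. a + M * k) ` {..<K}"
  then obtain k where k: "k < K" "j = a + M * k" by auto
  have "a + M * k < M * Suc k" using assms by simp
  also have "\<dots> \<le> M * K" using k(1) by (intro mult_le_mono2) simp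
  finally show "j \<in> {j. j < M * K \<and> j mod M = a}" using k assms by simp
qed

lemma sum_zeta_pow_residue_class:
  assumes "e \<le> r" "n \<le> r" "a < 2 ^ e" "odd c"
  shows "(\<Sum>j | j < 2 ^ r \<and> j mod 2 ^ e = a. zeta_pow (2 ^ n) (c * int j)) =
    (if n \<le> e then 2 ^ (r - e) * zeta_pow (2 ^ n) (c * int a) else 0)"
proof -
  define K :: nat where "K = 2 ^ (r - e)"
  define w where "w = zeta_pow (2 ^ n) (c * 2 ^ e)"
  have "(2::nat) ^ r = 2 ^ e * K" using assms(1) by (simp add: K_def flip: power_add)
  then have "(\<Sum>j | j < 2 ^ r \<and> j mod 2 ^ e = a. zeta_pow (2 ^ n) (c * int j)) =
      (\<Sum>k<K. zeta_pow (2 ^ n) (c * int (a + 2 ^ e * k)))"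
    using residue_class_below_eq_image[OF assms(3), of K] by (simp add: sum.reindex inj_on_def)
  also have "\<dots> = zeta_pow (2 ^ n) (c * int a) * (\<Sum>k<K. w ^ k)"
    by (simp add: sum_distrib_left w_def algebra_simps zeta_pow_add flip: zeta_pow_mult_nat)
  also have "\<dots> = (if n \<le> e then 2 ^ (r - e) * zeta_pow (2 ^ n) (c * int a) else 0)"
  proof (cases "n \<le> e")
    case True
    then have "c * 2 ^ e = int (2 ^ n) * (c * 2 ^ (e - n))"
      by (simp add: algebra_simps flip: power_add)
    then have "w = 1" unfolding w_def by (metis zero_less_numeral zero_less_power zeta_pow_multiple)
    then show ?thesis using True by (simp add: K_def)
  next
    case False
    then obtain d where n: "n = Suc (e + d)" by (metis add_Suc_right le_add1 less_imp_Suc_add not_less)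
    have "w ^ 2 ^ d = zeta_pow (2 * 2 ^ (e + d)) (int (2 ^ (e + d)) * c)"
      by (simp add: w_def n algebra_simps flip: zeta_pow_mult_nat power_add)
    also have "\<dots> = -1"
      using zeta_pow_cancel[of "2 ^ (e + d)" 2 c] zeta_pow_2_odd[OF assms(4)] by (simp add: mult.commute)
    finally have "w \<noteq> 1" by auto
    moreover have "w ^ K = 1"
    proof -
      have "int K * (c * 2 ^ e) = int (2 ^ n) * (c * 2 ^ (r - n))"
        using assms(1,2) by (simp add: K_def algebra_simps flip: power_add)
      then show ?thesis
        unfolding w_def zeta_pow_mult_nat[symmetric] by (metis zero_less_numeral zero_less_power zeta_pow_multiple)
    qed
    ultimately show ?thesis using False by (simp add: sum_gp_strict)
  qed
  finally show ?thesis .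
qed

lemma sum_odd_zeta_pow_by_residue:
  assumes "1 \<le> e" "e \<le> r" "n \<le> r" "odd c"
    and f: "\<And>j. odd j \<Longrightarrow> j < 2 ^ r \<Longrightarrow> f j = g (j mod 2 ^ e)"
  shows "(\<Sum>j | 1 \<le> j \<and> j \<le> 2 ^ r - 1 \<and> odd j. f j * zeta_pow (2 ^ n) (c * int j)) =
    (if n \<le> e then 2 ^ (r - e) * (\<Sum>a | a < 2 ^ e \<and> odd a. g a * zeta_pow (2 ^ n) (c * int a))
     else 0)"
proof -
  define J where "J = {j::nat. 1 \<le> j \<and> j \<le> 2 ^ r - 1 \<and> odd j}"
  define T where "T = {a::nat. a < 2 ^ e \<and> odd a}"
  have even_mod: "even (j mod 2 ^ e) \<longleftrightarrow> even j" for j :: nat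
  proof -
    have "2 dvd (2::nat) ^ e" using assms(1) by (simp add: dvd_power)
    then show ?thesis by (simp add: even_iff_mod_2_eq_zero mod_mod_cancel)
  qed
  have residue_class: "{j \<in> J. j mod 2 ^ e = a} = {j. j < 2 ^ r \<and> j mod 2 ^ e = a}" if "a \<in> T" for a
  proof -
    have "odd j" if "j mod 2 ^ e = a" for j
      using that \<open>a \<in> T\<close> even_mod[of j] by (simp add: T_def)
    moreover have "j \<le> 2 ^ r - 1 \<longleftrightarrow> j < 2 ^ r" for j :: nat
      using zero_less_power[of "2::nat" r] by linarith
    ultimately show ?thesis by (auto simp: J_def odd_pos Suc_le_eq)
  qed
  have "(\<Sum>j\<in>J. f j * zeta_pow (2 ^ n) (c * int j)) =
      (\<Sum>a\<in>T. \<Sum>j \<in> {j \<in> J. j mod 2 ^ e = a}. f j * zeta_pow (2 ^ n) (c * int j))"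
    by (rule sum.group[symmetric]) (auto simp: J_def T_def even_mod)
  also have "\<dots> = (\<Sum>a\<in>T. g a * (\<Sum>j | j < 2 ^ r \<and> j mod 2 ^ e = a. zeta_pow (2 ^ n) (c * int j)))"
  proof (rule sum.cong[OF refl])
    fix a assume a: "a \<in> T"
    have "f j = g a" if "j \<in> {j \<in> J. j mod 2 ^ e = a}" for j
      using that f by (auto simp: J_def)
    then show "(\<Sum>j \<in> {j \<in> J. j mod 2 ^ e = a}. f j * zeta_pow (2 ^ n) (c * int j)) =
        g a * (\<Sum>j | j < 2 ^ r \<and> j mod 2 ^ e = a. zeta_pow (2 ^ n) (c * int j))"
      by (simp add: sum_distrib_left residue_class[OF a])
  qed
  also have "\<dots> = (\<Sum>a\<in>T. g a * (if n \<le> e then 2 ^ (r - e) * zeta_pow (2 ^ n) (c * int a) else 0))"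
    by (rule sum.cong[OF refl]) (use assms(2-4) in \<open>simp add: sum_zeta_pow_residue_class T_def\<close>)
  also have "\<dots> = (if n \<le> e then 2 ^ (r - e) * (\<Sum>a\<in>T. g a * zeta_pow (2 ^ n) (c * int a)) else 0)"
    by (simp add: sum_distrib_left mult_ac)
  finally show ?thesis by (simp add: J_def T_def)
qed

section \<open>Powers of \<open>p\<close> modulo powers of two\<close>

lemma one_plus_two_pow_power_two_pow:
  fixes g u :: int
  assumes "g = 1 + 2 ^ e * u" "odd u" "2 \<le> e"
  shows "\<exists>v. odd v \<and> g ^ 2 ^ i = 1 + 2 ^ (e + i) * v"
proof (induction i)
  case 0
  then show ?case using assms by auto
next
  case (Suc i)
  then obtain v where v: "odd v" "g ^ 2 ^ i = 1 + 2 ^ (e + i) * v" by blast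
  define d where "d = e + i - 1"
  have d: "e + i = Suc d" "1 \<le> d" using assms(3) by (simp_all add: d_def)
  have "g ^ 2 ^ Suc i = (g ^ 2 ^ i) ^ 2" by (simp add: power_mult[symmetric] mult.commute)
  also have "\<dots> = 1 + 2 ^ (e + Suc i) * (v + 2 ^ d * v ^ 2)"
    unfolding v(2) using d by (simp add: power2_eq_square algebra_simps power_add)
  finally show ?case using v(1) d(2) by (intro exI[of _ "v + 2 ^ d * v ^ 2"]) simp
qed

lemma exists_power_cong_two_pow:
  fixes g u j :: int
  assumes g: "g = 1 + 2 ^ e * u" "odd u" "2 \<le> e" and "e \<le> r" and j: "j mod 2 ^ e = 1"
  shows "\<exists>k. 2 ^ r dvd g ^ k - j"
  using \<open>e \<le> r\<close>
proof (induction r rule: dec_induct)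
  case base
  have "(2::int) ^ e dvd 1 - j" using j g(3) by (simp add: mod_eq_dvd_iff[symmetric])
  then show ?case by (metis power_0)
next
  case (step r)
  then obtain k w where kw: "g ^ k - j = 2 ^ r * w" by (metis dvd_def)
  show ?case
  proof (cases "even w")
    \<comment> \<open>Otherwise correct \<open>g\<^sup>k\<close> by the factor \<open>g\<^bsup>2\<^sup>r\<^sup>-\<^sup>e\<^esup> \<equiv> 1 + 2\<^sup>r (mod 2\<^sup>r\<^sup>+\<^sup>1)\<close>.\<close>
    case True
    then obtain w' where "w = 2 * w'" by blast
    then have "g ^ k - j = 2 ^ Suc r * w'" using kw by simp
    then show ?thesis by (metis dvd_triv_left)
  next
    case False
    obtain v where v: "odd v" "g ^ 2 ^ (r - e) = 1 + 2 ^ r * v"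
      using one_plus_two_pow_power_two_pow[OF g, of "r - e"] step(1) by auto
    have "2 dvd (2::int) ^ e" using g(3) by (simp add: dvd_power)
    then have "odd j" using j by (metis mod_mod_cancel odd_iff_mod_2_eq_one odd_one)
    then obtain a where a: "w + j * v = 2 * a" using False v(1) by (metis evenE even_add even_mult_iff)
    define r' where "r' = r - 1"
    have r: "r = Suc r'" using step(1) g(3) by (simp add: r'_def)
    have "g ^ (k + 2 ^ (r - e)) - j = (j + 2 ^ r * w) * (1 + 2 ^ r * v) - j"
      using kw v(2) by (simp add: power_add algebra_simps)
    also have "\<dots> = 2 ^ r * (w + j * v) + 2 ^ r * 2 ^ r * w * v" by (simp add: algebra_simps)
    also have "\<dots> = 2 ^ Suc r * (a + 2 ^ r' * w * v)"
      unfolding a r by (simp add: algebra_simps)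
    finally show ?thesis by (metis dvd_triv_left)
  qed
qed

text \<open>\<open>j \<equiv> p\<^sup>k / p\<^sup>l (mod 2\<^sup>r)\<close>, i.e. \<open>j\<close> lies in the subgroup of \<open>(\<int>/2\<^sup>r)\<^sup>*\<close> generated by \<open>p\<close>;
  the exponent \<open>l\<close> avoids inverses.\<close>
definition in_powers_mod_two_pow :: "nat \<Rightarrow> nat \<Rightarrow> int \<Rightarrow> bool" where
  "in_powers_mod_two_pow p r j \<longleftrightarrow> (\<exists>k l. (2::int) ^ r dvd int p ^ k - j * int p ^ l)"

text \<open>For \<open>r = 2\<close> the only class \<open>\<equiv> 1 mod 4\<close> is \<open>p\<^sup>0\<close> itself, whatever \<open>p\<close> is.\<close>
lemma in_powers_mod_two_pow_mod_4:
  assumes "p mod 8 = 5 \<or> r = 2" "2 \<le> r" "j mod 4 = 1"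
  shows "in_powers_mod_two_pow p r j"
  using assms(1)
proof
  assume "r = 2"
  then have "(2::int) ^ r dvd int p ^ 0 - j * int p ^ 0"
    using assms(3) by (simp add: mod_eq_dvd_iff[symmetric])
  then show ?thesis unfolding in_powers_mod_two_pow_def by blast
next
  assume "p mod 8 = 5"
  then have "int p = 8 * (int p div 8) + 5" by presburger
  then have "int p = 1 + 2 ^ 2 * (2 * (int p div 8) + 1)" by simp
  then obtain k where "(2::int) ^ r dvd int p ^ k - j"
    using exists_power_cong_two_pow[of "int p" 2 "2 * (int p div 8) + 1" r j] assms(2,3) by auto
  then show ?thesis unfolding in_powers_mod_two_pow_def by (metis mult.right_neutral power_0)
qed

lemma in_powers_mod_two_pow_mod_8:
  assumes "p mod 8 = 3" "3 \<le> r" "j mod 8 = 1 \<or> j mod 8 = 3"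
  shows "in_powers_mod_two_pow p r j"
proof -
  have p: "int p mod 8 = 3" using assms(1) by presburger
  define q where "q = int p div 8"
  have "int p = 8 * q + 3" using p unfolding q_def by presburger
  then have p2: "int p ^ 2 = 1 + 2 ^ 3 * (8 * q ^ 2 + 6 * q + 1)" "odd (8 * q ^ 2 + 6 * q + 1)"
    by (simp_all add: power2_eq_square algebra_simps)
  have "\<exists>l. (j * int p ^ l) mod 2 ^ 3 = 1"
  proof (cases "j mod 8 = 1")
    case True
    then show ?thesis by (intro exI[of _ 0]) simp
  next
    case False
    then have "(j * int p) mod 8 = 1" using assms(3) p by (simp add: mod_mult_eq[symmetric])
    then show ?thesis by (intro exI[of _ 1]) simp
  qed
  then obtain l k where "(2::int) ^ r dvd (int p ^ 2) ^ k - j * int p ^ l"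
    using exists_power_cong_two_pow[OF p2 _ assms(2)] by fastforce
  then show ?thesis unfolding in_powers_mod_two_pow_def by (metis power_mult)
qed

section \<open>Multiplicative characters of a finite field\<close>

lemma power_card_UNIV_minus_one:
  fixes x :: "'a::{finite,field}"
  assumes "x \<noteq> 0"
  shows "x ^ (card (UNIV::'a set) - 1) = 1"
proof -
  let ?U = "UNIV - {0::'a}"
  have "bij_betw (\<lambda>y. x * y) ?U ?U"
    by (rule bij_betw_byWitness[where f'="\<lambda>y. inverse x * y"]) (use assms in auto)
  then have "(\<Prod>y\<in>?U. x * y) = (\<Prod>y\<in>?U. y)"
    using prod.reindex_bij_betw[of "\<lambda>y. x * y" ?U ?U "\<lambda>y. y"] by simp
  moreover have "(\<Prod>y\<in>?U. x * y) = x ^ card ?U * (\<Prod>y\<in>?U. y)"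
    by (simp add: prod.distrib)
  ultimately show ?thesis by (simp add: card_Diff_singleton)
qed

lemma power_card_UNIV:
  fixes x :: "'a::{finite,field}"
  shows "x ^ card (UNIV::'a set) = x"
proof (cases "x = 0")
  case False
  have "card (UNIV::'a set) = Suc (card (UNIV::'a set) - 1)" by (simp add: card_gt_0_iff)
  then show ?thesis using power_card_UNIV_minus_one[OF False] by (metis mult.right_neutral power_Suc)
qed (simp add: card_gt_0_iff)

lemma mult_char_one: "mult_char \<psi> \<Longrightarrow> \<psi> 1 = 1"
  unfolding mult_char_def by (metis mult_cancel_left1 mult_1 one_neq_zero)

lemma mult_char_power:
  assumes "mult_char \<psi>" "0 < k"
  shows "\<psi> (x ^ k) = \<psi> x ^ k"
proof (cases "x = 0")
  case True
  then show ?thesis using assms by (simp add: mult_char_def zero_power)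
next
  case False
  show ?thesis
    by (induction k) (use assms(1) False in \<open>simp_all add: mult_char_def mult_char_one\<close>)
qed

lemma mult_char_char_pow: "mult_char \<psi> \<Longrightarrow> 0 < k \<Longrightarrow> mult_char (char_pow \<psi> k)"
  by (simp add: mult_char_def char_pow_def power_mult_distrib)

lemma char_pow_char_pow: "char_pow (char_pow \<psi> a) b = char_pow \<psi> (a * b)"
  by (simp add: char_pow_def power_mult)

lemma power_char_order:
  fixes \<psi> :: "'a::{finite,field} \<Rightarrow> complex"
  assumes "mult_char \<psi>" "x \<noteq> 0"
  shows "\<psi> x ^ char_order \<psi> = 1"
proof -
  let ?P = "\<lambda>n. 0 < n \<and> (\<forall>x::'a. x \<noteq> 0 \<longrightarrow> \<psi> x ^ n = 1)"
  have "card {0::'a, 1} \<le> card (UNIV::'a set)" by (rule card_mono) simp_all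
  then have "0 < card (UNIV::'a set) - 1" by simp
  moreover have "\<psi> y ^ (card (UNIV::'a set) - 1) = 1" if "y \<noteq> 0" "0 < card (UNIV::'a set) - 1" for y
    using mult_char_power[OF assms(1) that(2), of y] power_card_UNIV_minus_one[OF that(1)]
      mult_char_one[OF assms(1)]
    by simp
  ultimately have "?P (card (UNIV::'a set) - 1)" by blast
  then have "?P (char_order \<psi>)" unfolding char_order_def by (rule LeastI)
  then show ?thesis using assms(2) by blast
qed

lemma char_pow_eq_if_cong:
  fixes \<psi> :: "'a::{finite,field} \<Rightarrow> complex"
  assumes "mult_char \<psi>" "0 < a" "0 < b" "int (char_order \<psi>) dvd int a - int b"
  shows "char_pow \<psi> a = char_pow \<psi> b"
proof
  fix x
  let ?n = "char_order \<psi>"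
  have ab: "a mod ?n = b mod ?n"
    using assms(4) by (metis mod_eq_dvd_iff of_nat_eq_iff zmod_int)
  have "\<psi> x ^ a = \<psi> x ^ b" if "x \<noteq> 0"
  proof -
    have "\<psi> x ^ c = \<psi> x ^ (c mod ?n)" for c
    proof -
      have "\<psi> x ^ c = \<psi> x ^ (c mod ?n) * (\<psi> x ^ ?n) ^ (c div ?n)"
        by (metis div_mult_mod_eq power_add power_mult add.commute mult.commute)
      then show ?thesis using power_char_order[OF assms(1) that] by simp
    qed
    then show ?thesis using ab by metis
  qed
  then show "char_pow \<psi> a x = char_pow \<psi> b x"
    using assms(1-3) by (cases "x = 0") (simp_all add: char_pow_def mult_char_def zero_power)
qed

lemma char_conj_eq_char_pow:
  fixes \<psi> :: "'a::{finite,field} \<Rightarrow> complex"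
  assumes "mult_char \<psi>" "1 < char_order \<psi>"
  shows "char_conj \<psi> = char_pow \<psi> (char_order \<psi> - 1)"
proof
  fix x
  let ?n = "char_order \<psi>"
  show "char_conj \<psi> x = char_pow \<psi> (?n - 1) x"
  proof (cases "x = 0")
    case True
    then show ?thesis using assms by (simp add: char_conj_def char_pow_def mult_char_def zero_power)
  next
    case False
    have unit: "\<psi> x ^ ?n = 1" by (rule power_char_order[OF assms(1) False])
    then have "norm (\<psi> x) ^ ?n = 1" by (metis norm_one norm_power)
    then have "norm (\<psi> x) = 1" using power_eq_imp_eq_base[of "norm (\<psi> x)" ?n 1] assms(2) by simp
    then have "\<psi> x * cnj (\<psi> x) = 1" by (simp add: complex_norm_square[symmetric])
    moreover have "\<psi> x * \<psi> x ^ (?n - 1) = 1"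
      using unit assms(2) by (metis Suc_diff_1 less_trans power_Suc zero_less_one)
    moreover have "\<psi> x \<noteq> 0" using assms(1) False by (simp add: mult_char_def)
    ultimately show ?thesis unfolding char_conj_def char_pow_def by (metis mult_left_cancel)
  qed
qed

lemma card_nonzero_squares:
  "card (UNIV::'a::{finite,field} set) - 1 \<le> 2 * card {x::'a. x \<noteq> 0 \<and> (\<exists>y. y * y = x)}"
proof -
  define S where "S = {x::'a. x \<noteq> 0 \<and> (\<exists>y. y * y = x)}"
  define R where "R = (\<lambda>x. SOME y::'a. y * y = x) ` S"
  have "UNIV - {0} \<subseteq> R \<union> uminus ` R"
  proof
    fix y :: 'a assume "y \<in> UNIV - {0}"
    then have yS: "y * y \<in> S" unfolding S_def by auto
    define z where "z = (SOME z::'a. z * z = y * y)"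
    have "z * z = y * y" unfolding z_def by (rule someI[of _ y]) simp
    then have "(z - y) * (z + y) = 0" by (simp add: algebra_simps)
    then have "y = z \<or> y = - z" by (auto simp: add_eq_0_iff2)
    moreover have "z \<in> R" unfolding R_def z_def using yS by blast
    ultimately show "y \<in> R \<union> uminus ` R" by blast
  qed
  then have "card (UNIV - {0::'a}) \<le> card R + card (uminus ` R)"
    by (meson card_Un_le card_mono finite le_trans)
  also have "\<dots> \<le> 2 * card S"
    using card_image_le[of R uminus] card_image_le[of S "\<lambda>x. SOME y::'a. y * y = x"]
    by (simp add: R_def)
  finally show ?thesis by (simp add: S_def card_Diff_singleton)
qed

lemma mult_char_eq_quad_char:
  fixes \<psi> :: "'a::{finite,field} \<Rightarrow> complex"
  assumes \<psi>: "mult_char \<psi>" and sq: "\<And>x. x \<noteq> 0 \<Longrightarrow> \<psi> x ^ 2 = 1"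
    and a: "a \<noteq> 0" "\<psi> a \<noteq> 1"
  shows "\<psi> = quad_char"
proof -
  \<comment> \<open>The nonzero squares lie in the kernel, which is at most half of \<open>F\<^sup>*\<close>, while they make up at least half.\<close>
  define S where "S = {x::'a. x \<noteq> 0 \<and> (\<exists>y. y * y = x)}"
  define K where "K = {x::'a. x \<noteq> 0 \<and> \<psi> x = 1}"
  define L where "L = {x::'a. x \<noteq> 0 \<and> \<psi> x \<noteq> 1}"
  have mult: "\<psi> (x * y) = \<psi> x * \<psi> y" if "x \<noteq> 0" "y \<noteq> 0" for x y
    using \<psi> that by (simp add: mult_char_def)
  have "S \<subseteq> K"
    using sq mult by (auto simp: S_def K_def power2_eq_square)
  have "card K \<le> card L"
  proof (rule card_inj_on_le)
    show "inj_on (\<lambda>x. a * x) K" using a by (auto simp: inj_on_def)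
    show "(\<lambda>x. a * x) ` K \<subseteq> L" using a mult by (auto simp: K_def L_def)
  qed simp
  moreover have "card K + card L = card (UNIV::'a set) - 1"
  proof -
    have "K \<union> L = UNIV - {0}" "K \<inter> L = {}" unfolding K_def L_def by auto
    then show ?thesis by (metis card_Diff_singleton card_Un_disjoint finite iso_tuple_UNIV_I)
  qed
  moreover have "card S \<le> card K" using \<open>S \<subseteq> K\<close> by (simp add: card_mono)
  ultimately have "card S = card K" using card_nonzero_squares[where 'a='a] by (simp add: S_def)
  then have "S = K" using \<open>S \<subseteq> K\<close> by (simp add: card_subset_eq)
  show ?thesis
  proof
    fix x :: 'a
    have "\<psi> x = 1 \<or> \<psi> x = -1" if "x \<noteq> 0" using sq[OF that] by (simp add: power2_eq_1_iff)
    then show "\<psi> x = quad_char x"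
      using \<open>S = K\<close> \<psi> by (auto simp: quad_char_def S_def K_def mult_char_def set_eq_iff)
  qed
qed

section \<open>Gauss sums are invariant under Frobenius\<close>

context
  fixes p s :: nat
  assumes card_UNIV: "card (UNIV :: 'a::{finite,field} set) = p ^ s" and s: "1 \<le> s"
begin

lemma power_p_power_s: "(x::'a) ^ p ^ s = x"
  using power_card_UNIV[of x] card_UNIV by simp

lemma inj_power_p: "inj (\<lambda>x::'a. x ^ p)"
proof (rule injI)
  fix x y :: 'a assume "x ^ p = y ^ p"
  moreover have "z ^ p ^ s = (z ^ p) ^ p ^ (s - 1)" for z :: 'a
    using s by (simp add: power_mult[symmetric] power_Suc[symmetric])
  ultimately have "x ^ p ^ s = y ^ p ^ s" by simp
  then show "x = y" by (simp add: power_p_power_s)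
qed

lemma trace_power_p: "trace p s ((x::'a) ^ p) = trace p s x"
proof -
  have "trace p s (x ^ p) = (\<Sum>i<s. x ^ p ^ Suc i)"
    unfolding trace_def by (simp add: power_mult[symmetric] mult.commute)
  also have "\<dots> = (\<Sum>i<s. x ^ p ^ i)"
    using sum.lessThan_Suc_shift[of "\<lambda>i. x ^ p ^ i" s] sum.lessThan_Suc[of "\<lambda>i. x ^ p ^ i" s]
    by (simp add: power_p_power_s)
  finally show ?thesis unfolding trace_def .
qed

lemma p_pos: "0 < p"
proof -
  have "0 < p ^ s" by (simp add: card_gt_0_iff flip: card_UNIV)
  then show ?thesis using s by (simp add: zero_less_power_eq)
qed

lemma gauss_sum_char_pow_mult_p:
  assumes "mult_char \<psi>"
  shows "gauss_sum p s (char_pow \<psi> (n * p)) = gauss_sum p s (char_pow (\<psi> :: 'a \<Rightarrow> complex) n)"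
proof -
  define f where "f x = \<psi> x ^ n * zeta_pow p (int (trace_index p s x))" for x
  have "gauss_sum p s (char_pow \<psi> n) = sum f (range (\<lambda>x. x ^ p))"
    using inj_power_p by (simp add: gauss_sum_def f_def char_pow_def finite_UNIV_inj_surj)
  also have "\<dots> = (\<Sum>x\<in>UNIV. f (x ^ p))"
    using inj_power_p by (simp add: sum.reindex)
  also have "\<dots> = gauss_sum p s (char_pow \<psi> (n * p))"
    using p_pos by (simp add: gauss_sum_def f_def char_pow_def trace_index_def trace_power_p
        mult_char_power[OF assms] power_mult[symmetric] mult.commute)
  finally show ?thesis ..
qed

lemma gauss_sum_char_pow_mult_p_power:
  "mult_char \<psi> \<Longrightarrow> gauss_sum p s (char_pow \<psi> (n * p ^ k)) = gauss_sum p s (char_pow (\<psi> :: 'a \<Rightarrow> complex) n)"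
proof (induction k)
  case (Suc k)
  then show ?case
    using gauss_sum_char_pow_mult_p[of \<psi> "n * p ^ k"] by (simp only: power_Suc2 mult.assoc)
qed simp

lemma gauss_sum_char_pow_cong:
  fixes \<psi> :: "'a \<Rightarrow> complex"
  assumes "mult_char \<psi>" "0 < a" "0 < b"
    and "int (char_order \<psi>) dvd int a * int p ^ l - int b * int p ^ k"
  shows "gauss_sum p s (char_pow \<psi> a) = gauss_sum p s (char_pow \<psi> b)"
proof -
  have "char_pow \<psi> (a * p ^ l) = char_pow \<psi> (b * p ^ k)"
    using assms p_pos by (intro char_pow_eq_if_cong) simp_all
  then show ?thesis using gauss_sum_char_pow_mult_p_power[OF assms(1)] by metis
qed

end

section \<open>The sums \<open>W\<close>\<close>

lemma W_eq_sum:
  assumes "r \<le> m" "t \<le> m"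
  shows "W p s \<chi> m r t c = (\<Sum>j | 1 \<le> j \<and> j \<le> 2 ^ r - 1 \<and> odd j.
    gauss_sum p s (char_pow \<chi> (2 ^ (m - r) * j)) * zeta_pow (2 ^ (r - t)) (c * int j))"
  unfolding W_def using zeta_pow_two_pow_scale[OF assms] by (simp add: mult.assoc)

locale two_power_order_char =
  fixes \<chi> :: "'a::{finite,field} \<Rightarrow> complex" and p s m :: nat
  assumes card_UNIV: "card (UNIV::'a set) = p ^ s" and s: "1 \<le> s"
    and \<chi>: "mult_char \<chi>" and order: "char_order \<chi> = 2 ^ m" and m: "1 \<le> m"
begin

abbreviation G_pow :: "nat \<Rightarrow> complex" where
  "G_pow r \<equiv> gauss_sum p s (char_pow \<chi> (2 ^ (m - r)))"

abbreviation G_conj_pow :: "nat \<Rightarrow> complex" where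
  "G_conj_pow r \<equiv> gauss_sum p s (char_pow (char_conj \<chi>) (2 ^ (m - r)))"

lemma gauss_sum_char_pow_in_powers:
  assumes "r \<le> m" "0 < j" "in_powers_mod_two_pow p r (int j)"
  shows "gauss_sum p s (char_pow \<chi> (2 ^ (m - r) * j)) = G_pow r"
proof -
  obtain k l where kl: "(2::int) ^ r dvd int p ^ k - int j * int p ^ l"
    using assms(3) unfolding in_powers_mod_two_pow_def by blast
  have "(2::int) ^ m = 2 ^ (m - r) * 2 ^ r" using assms(1) by (simp flip: power_add)
  then have "(2::int) ^ m dvd - (2 ^ (m - r) * (int p ^ k - int j * int p ^ l))"
    using kl by simp
  moreover have "A * J * Q' - A * Q = - (A * (Q - J * Q'))" for A J Q Q' :: int
    by (simp add: algebra_simps)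
  ultimately have "int (char_order \<chi>) dvd int (2 ^ (m - r) * j) * int p ^ l - int (2 ^ (m - r)) * int p ^ k"
    unfolding order by simp
  then show ?thesis
    using gauss_sum_char_pow_cong[OF card_UNIV s \<chi>] assms(2) by simp
qed

lemma gauss_sum_char_pow_neg_in_powers:
  assumes "r \<le> m" "0 < j" "in_powers_mod_two_pow p r (- int j)"
  shows "gauss_sum p s (char_pow \<chi> (2 ^ (m - r) * j)) = G_conj_pow r"
proof -
  obtain k l where kl: "(2::int) ^ r dvd int p ^ k + int j * int p ^ l"
    using assms(3) unfolding in_powers_mod_two_pow_def by auto
  have "1 < (2::nat) ^ m" using m one_less_power[of "2::nat" m] by simp
  then have conj: "char_conj \<chi> = char_pow \<chi> (2 ^ m - 1)"
    using char_conj_eq_char_pow[OF \<chi>] order by simp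
  have "(2::int) ^ m = 2 ^ (m - r) * 2 ^ r" using assms(1) by (simp flip: power_add)
  then have "(2::int) ^ m dvd 2 ^ (m - r) * (int p ^ k + int j * int p ^ l) - 2 ^ m * (2 ^ (m - r) * int p ^ k)"
    using kl by simp
  moreover have "A * J * Q' - (B - 1) * A * Q = A * (Q + J * Q') - B * (A * Q)" for A B J Q Q' :: int
    by (simp add: algebra_simps)
  moreover have "int (2 ^ m - 1) = 2 ^ m - 1" using \<open>1 < 2 ^ m\<close> by (simp add: of_nat_diff)
  ultimately have "int (char_order \<chi>) dvd
      int (2 ^ (m - r) * j) * int p ^ l - int ((2 ^ m - 1) * 2 ^ (m - r)) * int p ^ k"
    unfolding order by simp
  then show ?thesis
    using gauss_sum_char_pow_cong[OF card_UNIV s \<chi>] assms(2) \<open>1 < 2 ^ m\<close>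
    by (simp add: conj char_pow_char_pow)
qed

lemma char_pow_half_order_eq_quad_char: "char_pow \<chi> (2 ^ (m - 1)) = quad_char"
proof -
  have m_split: "(2::nat) ^ m = 2 ^ (m - 1) * 2" using m by (simp flip: power_Suc2)
  obtain a where a: "a \<noteq> 0" "char_pow \<chi> (2 ^ (m - 1)) a \<noteq> 1"
  proof (rule ccontr)
    assume "\<not> thesis"
    then have "char_order \<chi> \<le> 2 ^ (m - 1)"
      using that unfolding char_order_def by (intro Least_le) (auto simp: char_pow_def)
    then show False using m by (simp add: order)
  qed
  show ?thesis
  proof (rule mult_char_eq_quad_char[where a = a])
    show "mult_char (char_pow \<chi> (2 ^ (m - 1)))" by (simp add: mult_char_char_pow \<chi>)
    show "char_pow \<chi> (2 ^ (m - 1)) x ^ 2 = 1" if "x \<noteq> 0" for x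
      using power_char_order[OF \<chi> that] by (simp add: char_pow_def order m_split power_mult)
  qed (use a in auto)
qed

lemma W_level_1:
  assumes "t \<le> m" "odd c"
  shows "W p s \<chi> m 1 t c =
    (if t = 0 then - gauss_sum p s (quad_char :: 'a \<Rightarrow> complex)
     else gauss_sum p s (quad_char :: 'a \<Rightarrow> complex))"
proof -
  have "{j::nat. 1 \<le> j \<and> j \<le> 2 ^ 1 - 1 \<and> odd j} = {1}" by auto
  then have "W p s \<chi> m 1 t c = gauss_sum p s (quad_char :: 'a \<Rightarrow> complex) * zeta_pow (2 ^ (1 - t)) c"
    using W_eq_sum[of 1 m t p s \<chi> c] m assms(1) char_pow_half_order_eq_quad_char by simp
  then show ?thesis using zeta_pow_2_odd[OF assms(2)] by (cases t) simp_all
qed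

lemma gauss_sum_char_pow_mod_4:
  assumes "p mod 8 = 5 \<or> r = 2" "2 \<le> r" "r \<le> m" "odd j"
  shows "gauss_sum p s (char_pow \<chi> (2 ^ (m - r) * j)) = (if j mod 4 = 1 then G_pow r else G_conj_pow r)"
proof (cases "j mod 4 = 1")
  case True
  then have "int j mod 4 = 1" by presburger
  then show ?thesis using True assms
    by (simp add: gauss_sum_char_pow_in_powers in_powers_mod_two_pow_mod_4 odd_pos)
next
  case False
  then have "(- int j) mod 4 = 1" using assms(4) by presburger
  then show ?thesis using False assms
    by (simp add: gauss_sum_char_pow_neg_in_powers in_powers_mod_two_pow_mod_4 odd_pos)
qed

lemma gauss_sum_char_pow_mod_8:
  assumes "p mod 8 = 3" "3 \<le> r" "r \<le> m" "odd j"
  shows "gauss_sum p s (char_pow \<chi> (2 ^ (m - r) * j)) =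
    (if j mod 8 = 1 \<or> j mod 8 = 3 then G_pow r else G_conj_pow r)"
proof (cases "j mod 8 = 1 \<or> j mod 8 = 3")
  case True
  then have "int j mod 8 = 1 \<or> int j mod 8 = 3" by presburger
  then show ?thesis using True assms
    by (simp add: gauss_sum_char_pow_in_powers in_powers_mod_two_pow_mod_8 odd_pos)
next
  case False
  then have "(- int j) mod 8 = 1 \<or> (- int j) mod 8 = 3" using assms(4) by presburger
  then show ?thesis using False assms
    by (simp add: gauss_sum_char_pow_neg_in_powers in_powers_mod_two_pow_mod_8 odd_pos)
qed

lemma W_mod_4_classes:
  assumes "p mod 8 = 5 \<or> r = 2" "2 \<le> r" "r \<le> m" "t \<le> m" "odd c"
  shows "W p s \<chi> m r t c = (if r - t \<le> 2 then 2 ^ (r - 2) *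
    (G_pow r * zeta_pow (2 ^ (r - t)) c + G_conj_pow r * zeta_pow (2 ^ (r - t)) (3 * c)) else 0)"
proof -
  have "W p s \<chi> m r t c = (if r - t \<le> 2 then 2 ^ (r - 2) * (\<Sum>a | a < 2 ^ 2 \<and> odd a.
      (if a = 1 then G_pow r else G_conj_pow r) * zeta_pow (2 ^ (r - t)) (c * int a)) else 0)"
    unfolding W_eq_sum[OF assms(3,4)]
    by (rule sum_odd_zeta_pow_by_residue) (use assms gauss_sum_char_pow_mod_4 in auto)
  also have "{a::nat. a < 2 ^ 2 \<and> odd a} = {1, 3}" by auto presburger
  finally show ?thesis by (simp add: mult.commute)
qed

lemma W_mod_4:
  assumes "p mod 8 = 5 \<or> r = 2" "2 \<le> r" "r \<le> m" "t \<le> m" "odd c"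
  shows "W p s \<chi> m r t c =
    (if r \<le> t then 2 ^ (r - 2) * (G_pow r + G_conj_pow r)
     else if r = t + 1 then - (2 ^ (r - 2) * (G_pow r + G_conj_pow r))
     else if r = t + 2 then 2 ^ (r - 2) * \<i> powi c * (G_pow r - G_conj_pow r)
     else 0)"
proof -
  define n where "n = r - t"
  note W = W_mod_4_classes[OF assms, folded n_def]
  have z2: "zeta_pow 2 c = -1" "zeta_pow 2 (3 * c) = -1"
    using assms(5) by (simp_all add: zeta_pow_2_odd)
  have "zeta_pow (2 ^ 2) (c + 2 ^ (2 - 1) * c) = - zeta_pow (2 ^ 2) c"
    by (rule zeta_pow_two_pow_add_half) (simp_all add: assms(5))
  then have z4: "zeta_pow 4 (3 * c) = - (\<i> powi c)" by (simp add: zeta_pow_4)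
  consider "n = 0" "r \<le> t" | "n = 1" "r = t + 1" | "n = 2" "r = t + 2" | "n \<ge> 3" "t + 2 < r"
    unfolding n_def by linarith
  then show ?thesis
  proof cases
    case 1
    have "W p s \<chi> m r t c = 2 ^ (r - 2) * (G_pow r + G_conj_pow r)"
      unfolding W 1(1) by simp
    then show ?thesis using 1 by simp
  next
    case 2
    have "W p s \<chi> m r t c = - (2 ^ (r - 2) * (G_pow r + G_conj_pow r))"
      unfolding W 2(1) by (simp add: z2) (simp add: algebra_simps)
    then show ?thesis using 2 by simp
  next
    case 3
    have "W p s \<chi> m r t c = 2 ^ (r - 2) * \<i> powi c * (G_pow r - G_conj_pow r)"
      unfolding W 3(1) using z4 by (simp add: zeta_pow_4 algebra_simps)
    then show ?thesis using 3 by simp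
  next
    case 4
    then show ?thesis unfolding W by simp
  qed
qed

lemma W_mod_8_classes:
  assumes "p mod 8 = 3" "3 \<le> r" "r \<le> m" "t \<le> m" "odd c"
  shows "W p s \<chi> m r t c = (if r - t \<le> 3 then 2 ^ (r - 3) *
    (G_pow r * (zeta_pow (2 ^ (r - t)) c + zeta_pow (2 ^ (r - t)) (3 * c)) +
     G_conj_pow r * (zeta_pow (2 ^ (r - t)) (5 * c) + zeta_pow (2 ^ (r - t)) (7 * c))) else 0)"
proof -
  have "W p s \<chi> m r t c = (if r - t \<le> 3 then 2 ^ (r - 3) * (\<Sum>a | a < 2 ^ 3 \<and> odd a.
      (if a = 1 \<or> a = 3 then G_pow r else G_conj_pow r) * zeta_pow (2 ^ (r - t)) (c * int a)) else 0)"
    unfolding W_eq_sum[OF assms(3,4)]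
    by (rule sum_odd_zeta_pow_by_residue) (use assms gauss_sum_char_pow_mod_8 in auto)
  also have "{a::nat. a < 2 ^ 3 \<and> odd a} = {1, 3, 5, 7}" by auto presburger
  finally show ?thesis by (simp add: algebra_simps)
qed

lemma W_mod_8:
  assumes "p mod 8 = 3" "3 \<le> r" "r \<le> m" "t \<le> m" "odd c"
  shows "W p s \<chi> m r t c =
    (if r \<le> t then 2 ^ (r - 2) * (G_pow r + G_conj_pow r)
     else if r = t + 1 then - (2 ^ (r - 2) * (G_pow r + G_conj_pow r))
     else if r = t + 3 then 2 ^ (r - 3) * (zeta_pow 8 c + zeta_pow 8 (3 * c)) * (G_pow r - G_conj_pow r)
     else 0)"
proof -
  define n where "n = r - t"
  note W = W_mod_8_classes[OF assms, folded n_def]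
  have "r - 2 = Suc (r - 3)" using assms(2) by simp
  then have r2: "(2::complex) ^ (r - 2) = 2 * 2 ^ (r - 3)" by simp
  have z2: "zeta_pow 2 c = -1" "zeta_pow 2 (3 * c) = -1"
    using assms(5) by (simp_all add: zeta_pow_2_odd)
  have "zeta_pow (2 ^ 2) (c + 2 ^ (2 - 1) * c) = - zeta_pow (2 ^ 2) c"
    by (rule zeta_pow_two_pow_add_half) (simp_all add: assms(5))
  then have z4: "zeta_pow 4 (3 * c) = - zeta_pow 4 c" by (simp add: algebra_simps)
  have z_period: "zeta_pow (2 ^ n) (5 * c) = zeta_pow (2 ^ n) c"
      "zeta_pow (2 ^ n) (7 * c) = zeta_pow (2 ^ n) (3 * c)" if "n \<le> 2"
    using zeta_pow_two_pow_add_multiple[OF that, of c c] zeta_pow_two_pow_add_multiple[OF that, of "3 * c" c]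
    by simp_all
  have z_half: "zeta_pow 8 (5 * c) = - zeta_pow 8 c" "zeta_pow 8 (7 * c) = - zeta_pow 8 (3 * c)"
    using zeta_pow_two_pow_add_half[of 3 c c] zeta_pow_two_pow_add_half[of 3 c "3 * c"] assms(5)
    by simp_all
  consider "n = 0" "r \<le> t" | "n = 1" "r = t + 1" | "n = 2" "r = t + 2" | "n = 3" "r = t + 3"
    | "n \<ge> 4" "t + 3 < r"
    unfolding n_def by linarith
  then show ?thesis
  proof cases
    case 1
    have "W p s \<chi> m r t c = 2 ^ (r - 2) * (G_pow r + G_conj_pow r)"
      unfolding W 1(1) by (simp add: r2 algebra_simps)
    then show ?thesis using 1 by simp
  next
    case 2
    then have "n \<le> 2" by simp
    have "W p s \<chi> m r t c = - (2 ^ (r - 2) * (G_pow r + G_conj_pow r))"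
      unfolding W z_period[OF \<open>n \<le> 2\<close>] unfolding 2(1) by (simp add: z2) (simp add: r2 algebra_simps)
    then show ?thesis using 2 by simp
  next
    case 3
    then have "n \<le> 2" by simp
    have "W p s \<chi> m r t c = 0"
      unfolding W z_period[OF \<open>n \<le> 2\<close>] unfolding 3(1) by (simp add: z4)
    then show ?thesis using 3 by simp
  next
    case 4
    have "W p s \<chi> m r t c = 2 ^ (r - 3) * (zeta_pow 8 c + zeta_pow 8 (3 * c)) * (G_pow r - G_conj_pow r)"
      unfolding W 4(1) by (simp add: z_half) (simp add: algebra_simps)
    then show ?thesis using 4 by simp
  next
    case 5
    then show ?thesis unfolding W by simp
  qed
qed

end

theorem lemma14:
  fixes \<chi> :: "'a::{finite,field} \<Rightarrow> complex"
    and p s m r t :: nat and c0 :: int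
  assumes "prime p" and "p mod 8 = 3 \<or> p mod 8 = 5"
    and "s \<ge> 1" and "card (UNIV :: 'a set) = p ^ s"
    and "2 ^ m dvd (card (UNIV :: 'a set) - 1)"
    and "p mod 8 = 3 \<Longrightarrow> m \<ge> 3" and "p mod 8 = 5 \<Longrightarrow> m \<ge> 2"
    and "mult_char \<chi>" and "char_order \<chi> = 2 ^ m"
    and "1 \<le> r" and "r \<le> m" and "t \<le> m" and "odd c0"
  shows "W p s \<chi> m r t c0 =
    (let G = gauss_sum p s;
         A = G (char_pow \<chi> (2^(m-r))); B = G (char_pow (char_conj \<chi>) (2^(m-r)))
     in if r = 1 then (if t = 0 then - G quad_char else G quad_char)
     else if r = 2 then
       (if t \<ge> 2 then A + B else if t = 1 then - (A + B) else \<i> powi c0 * (A - B))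
     else
       (if r \<le> t then 2^(r-2) * (A + B)
        else if r = t + 1 then - (2^(r-2) * (A + B))
        else if r = t + 2 \<and> p mod 8 = 5 then 2^(r-2) * \<i> powi c0 * (A - B)
        else if r = t + 3 \<and> p mod 8 = 3 \<and> (c0 mod 8 = 1 \<or> c0 mod 8 = 3)
          then 2^(r-3) * \<i> * complex_of_real (sqrt 2) * (A - B)
        else if r = t + 3 \<and> p mod 8 = 3 \<and> (c0 mod 8 = 5 \<or> c0 mod 8 = 7)
          then - (2^(r-3) * \<i> * complex_of_real (sqrt 2) * (A - B))
        else 0))"
proof -
  interpret two_power_order_char \<chi> p s m
    using assms(3,4,8-11) by unfold_locales simp_all
  consider "r = 1" | "r = 2" | "3 \<le> r" "p mod 8 = 5" | "3 \<le> r" "p mod 8 = 3"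
    using assms(2,10) by linarith
  then show ?thesis
  proof cases
    case 1
    then show ?thesis using W_level_1[OF assms(12,13)] by (simp add: Let_def)
  next
    case 2
    then show ?thesis using W_mod_4[of r t c0] assms(11-13) by (simp add: Let_def)
  next
    case 3
    then show ?thesis using W_mod_4[of r t c0] assms(11-13) by (simp add: Let_def)
  next
    case 4
    have "c0 mod 8 = 1 \<or> c0 mod 8 = 3 \<or> c0 mod 8 = 5 \<or> c0 mod 8 = 7"
      using assms(13) by presburger
    then show ?thesis
      using 4 W_mod_8[of r t c0] assms(11-13) zeta_pow_8_odd_sum[OF assms(13)]
      by (auto simp: Let_def)
  qed
qed

end
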